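(* Let $\mathbb{U}$ be the Urysohn space and $\mathcal{K}(\mathbb{U})$ the standard Borel space (with the Effros Borel structure) of closed subsets of $\mathbb{U}$. The set $\mathcal{ALC}\subseteq\mathcal{K}(\mathbb{U})$ of all closed subsets of $\mathbb{U}$ that are almost locally compact is a Borel subset of $\mathcal{K}(\mathbb{U})$.
   Context: A topological space is almost locally compact if it contains a dense locally compact subspace. *)

theory Defs
  imports "HOL-Analysis.Analysis"
begin

text \<open>Kat\v{e}tov (one-point extension) functions on a finite set A of a metric space.\<close>
definition katetov_on :: "'a::metric_space set \<Rightarrow> ('a \<Rightarrow> real) \<Rightarrow> bool" where
  "katetov_on A f \<longleftrightarrow>
     (\<forall>x\<in>A. \<forall>y\<in>A. \<bar>f x - f y\<bar> \<le> dist x y \<and> dist x y \<le> f x + f y)"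

text \<open>The Urysohn space: the (unique up to isometry) Polish metric space with the
  finite extension property. The type 'a carries this metric.\<close>
definition urysohn_extension_property :: "'a::metric_space itself \<Rightarrow> bool" where
  "urysohn_extension_property (TYPE('a)) \<longleftrightarrow>
     (\<forall>(A::'a set) f. finite A \<and> katetov_on A f \<longrightarrow> (\<exists>z. \<forall>x\<in>A. dist z x = f x))"

definition effros_borel :: "'a::topological_space set measure" where
  "effros_borel = sigma {F. closed F} {{F. closed F \<and> F \<inter> U \<noteq> {}} | U. open U}"

definition almost_locally_compact :: "'a::topological_space set \<Rightarrow> bool" where
  "almost_locally_compact F \<longleftrightarrow>
     (\<exists>D. D \<subseteq> F \<and> F \<subseteq> closure D \<and> locally_compact_space (top_of_set D))"

end

(*
  A point of F with a compact neighbourhood in F is called locally compact. These points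
  always form a locally compact subspace, and every dense locally compact subspace of F
  consists of such points; so F is almost locally compact iff its locally compact points
  are dense in F. For closed F in a complete space, a point is locally compact iff F is
  totally bounded near it, so density means: every basic open set B meeting F contains a
  basic open set B' meeting F with F \<inter> B' totally bounded. For open U, total boundedness
  of F \<inter> U says that for every m, F misses the open set obtained from U by removing
  finitely many closed balls of radius 1/(m+1) centred on a dense sequence. With a
  countable basis all quantifiers range over countable sets, so the condition is Effros
  Borel.
*)
theory Submission
  imports Defs
begin

lemma compact_eq_closed_totally_bounded:
  fixes S :: "'a::complete_space set"
  shows "compact S \<longleftrightarrow> closed S \<and> totally_bounded S"
  by (simp add: compact_eq_totally_bounded complete_eq_closed totally_bounded_metric ball_def)

lemma dense_sequenceE:
  obtains d :: "nat \<Rightarrow> 'a::{metric_space, second_countable_topology}"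
  where "\<And>x e. e > 0 \<Longrightarrow> \<exists>i. dist (d i) x < e"
proof -
  obtain D :: "'a set" where D: "countable D" "\<And>X. open X \<Longrightarrow> X \<noteq> {} \<Longrightarrow> \<exists>y\<in>D. y \<in> X"
    by (rule countable_dense_setE) blast
  have "D \<noteq> {}" using D(2)[of UNIV] by auto
  have "\<exists>i. dist (from_nat_into D i) x < e" if "e > 0" for x and e :: real
  proof -
    obtain y where "y \<in> D" "dist y x < e"
      using D(2)[of "ball x e"] \<open>e > 0\<close> by (auto simp: dist_commute)
    then show ?thesis using from_nat_into_surj[OF D(1)] by metis
  qed
  then show ?thesis using that by blast
qed

lemma totally_bounded_iff_covered_by_sequence:
  fixes d :: "nat \<Rightarrow> 'a::metric_space"
  assumes dense: "\<And>x e. e > 0 \<Longrightarrow> \<exists>i. dist (d i) x < e"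
  shows "totally_bounded S \<longleftrightarrow> (\<forall>m. \<exists>N. S \<subseteq> (\<Union>j<N. cball (d j) (inverse (Suc m))))"
proof
  assume tb: "totally_bounded S"
  show "\<forall>m. \<exists>N. S \<subseteq> (\<Union>j<N. cball (d j) (inverse (Suc m)))"
  proof
    fix m
    define r :: real where "r = inverse (Suc m)"
    have "r > 0" by (simp add: r_def)
    then obtain k where k: "finite k" "S \<subseteq> (\<Union>x\<in>k. {y. dist x y < r / 2})"
      using tb unfolding totally_bounded_metric by (meson half_gt_zero)
    obtain g where g: "\<And>x. dist (d (g x)) x < r / 2"
      using dense \<open>r > 0\<close> by (metis half_gt_zero)
    obtain N where N: "g ` k \<subseteq> {..<N}"
      using finite_nat_bounded k(1) by blast
    have "S \<subseteq> (\<Union>j<N. cball (d j) r)"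
    proof
      fix y assume "y \<in> S"
      then obtain x where "x \<in> k" "dist x y < r / 2" using k(2) by blast
      then have "dist (d (g x)) y \<le> r" "g x < N"
        using g[of x] dist_triangle[of "d (g x)" y x] N by auto
      then show "y \<in> (\<Union>j<N. cball (d j) r)" by auto
    qed
    then show "\<exists>N. S \<subseteq> (\<Union>j<N. cball (d j) (inverse (Suc m)))"
      unfolding r_def by blast
  qed
next
  assume cover: "\<forall>m. \<exists>N. S \<subseteq> (\<Union>j<N. cball (d j) (inverse (Suc m)))"
  show "totally_bounded S"
    unfolding totally_bounded_metric
  proof (intro allI impI)
    fix e :: real assume "e > 0"
    then obtain m where m: "inverse (Suc m) < e" using reals_Archimedean by blast
    obtain N where "S \<subseteq> (\<Union>j<N. cball (d j) (inverse (Suc m)))" using cover by blast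
    moreover have "cball (d j) (inverse (Suc m)) \<subseteq> {y. dist (d j) y < e}" for j
      using m by auto
    ultimately have "S \<subseteq> (\<Union>x\<in>d ` {..<N}. {y. dist x y < e})" by blast
    then show "\<exists>k. finite k \<and> S \<subseteq> (\<Union>x\<in>k. {y. dist x y < e})" by blast
  qed
qed

lemma space_effros_borel: "space effros_borel = {F. closed F}"
  unfolding effros_borel_def by (subst space_measure_of) auto

lemma sets_effros_borel_meets:
  assumes "open U"
  shows "{F \<in> space effros_borel. F \<inter> U \<noteq> {}} \<in> sets effros_borel"
proof -
  have "{F. closed F \<and> F \<inter> U \<noteq> {}} \<in> sigma_sets {F. closed F} {{F. closed F \<and> F \<inter> U \<noteq> {}} | U. open U}"
    using assms by (intro sigma_sets.Basic) blast
  then show ?thesis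
    unfolding effros_borel_def by (subst sets_measure_of) (auto simp: space_measure_of_conv)
qed

lemma sets_effros_borel_totally_bounded_Int:
  fixes U :: "'a::{metric_space, second_countable_topology} set"
  assumes "open U"
  shows "{F \<in> space effros_borel. totally_bounded (F \<inter> U)} \<in> sets effros_borel"
proof -
  obtain d :: "nat \<Rightarrow> 'a" where dense: "\<And>x e. e > 0 \<Longrightarrow> \<exists>i. dist (d i) x < e"
    using dense_sequenceE by blast
  define V where "V m N = U - (\<Union>j<N. cball (d j) (inverse (Suc m)))" for m N :: nat
  have "F \<inter> V m N = {} \<longleftrightarrow> F \<inter> U \<subseteq> (\<Union>j<N. cball (d j) (inverse (Suc m)))" for F m N
    unfolding V_def by blast
  then have "totally_bounded (F \<inter> U) \<longleftrightarrow> (\<forall>m. \<exists>N. \<not> F \<inter> V m N \<noteq> {})" for F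
    by (simp add: totally_bounded_iff_covered_by_sequence[OF dense])
  moreover have "open (V m N)" for m N
    unfolding V_def using assms by (intro open_Diff closed_UN) auto
  ultimately show ?thesis
    by (simp only:) (intro sets.sets_Collect_countable_All sets.sets_Collect_countable_Ex
        sets.sets_Collect_neg sets_effros_borel_meets)
qed

definition locally_compact_points :: "'a::metric_space set \<Rightarrow> 'a set" where
  "locally_compact_points F = {x \<in> F. \<exists>e>0. compact (F \<inter> cball x e)}"

lemma locally_compact_space_locally_compact_points:
  "locally_compact_space (top_of_set (locally_compact_points F))"
  unfolding locally_compact_space_def
proof
  fix x assume "x \<in> topspace (top_of_set (locally_compact_points F))"
  then have x: "x \<in> locally_compact_points F" by simp
  then obtain e where e: "e > 0" "compact (F \<inter> cball x e)" "x \<in> F"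
    by (auto simp: locally_compact_points_def)
  have compact_smaller: "compact (F \<inter> cball y r)" if "cball y r \<subseteq> cball x e" for y r
  proof -
    have "F \<inter> cball y r = (F \<inter> cball x e) \<inter> cball y r" using that by blast
    then show ?thesis using e(2) by (simp add: compact_Int_closed)
  qed
  define K where "K = F \<inter> cball x (e / 2)"
  have cball_in_cball: "cball y (e / 2) \<subseteq> cball x e" if "y \<in> K" for y
    using that by (auto simp: K_def) metric
  have "K \<subseteq> locally_compact_points F"
  proof
    fix y assume "y \<in> K"
    then have "y \<in> F" "compact (F \<inter> cball y (e / 2))"
      using compact_smaller cball_in_cball by (auto simp: K_def)
    then show "y \<in> locally_compact_points F"
      unfolding locally_compact_points_def using e(1) half_gt_zero by blast
  qed
  moreover have "compact K"
    unfolding K_def using e(1) by (intro compact_smaller) auto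
  ultimately show "\<exists>U K. openin (top_of_set (locally_compact_points F)) U
      \<and> compactin (top_of_set (locally_compact_points F)) K \<and> x \<in> U \<and> U \<subseteq> K"
  proof (intro exI conjI)
    show "openin (top_of_set (locally_compact_points F)) (locally_compact_points F \<inter> ball x (e / 2))"
      by (intro openin_open_Int) simp
    show "x \<in> locally_compact_points F \<inter> ball x (e / 2)"
      using x e(1) by simp
    show "locally_compact_points F \<inter> ball x (e / 2) \<subseteq> K"
      by (auto simp: K_def locally_compact_points_def)
  qed (simp add: compactin_subtopology)
qed

lemma dense_locally_compact_subset_locally_compact_points:
  assumes "D \<subseteq> F" "F \<subseteq> closure D" "locally_compact_space (top_of_set D)"
  shows "D \<subseteq> locally_compact_points F"
proof
  fix y assume "y \<in> D"
  then obtain U K where UK: "openin (top_of_set D) U" "compactin (top_of_set D) K" "y \<in> U" "U \<subseteq> K"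
    using assms(3) unfolding locally_compact_space_def by fastforce
  obtain W where W: "open W" "U = D \<inter> W" using UK(1) by (auto simp: openin_open)
  have K: "compact K" "K \<subseteq> F" using UK(2) assms(1) by (auto simp: compactin_subtopology)
  have "F \<inter> W \<subseteq> closure (W \<inter> D)"
    using assms(2) open_Int_closure_subset[OF W(1), of D] by blast
  also have "\<dots> \<subseteq> K"
    using W(2) UK(4) closure_minimal[of "W \<inter> D" K] compact_imp_closed[OF K(1)] by blast
  finally have FWK: "F \<inter> W \<subseteq> K" .
  obtain r where r: "r > 0" "cball y r \<subseteq> W"
    using W UK(3) open_contains_cball by blast
  then have "F \<inter> cball y r = K \<inter> cball y r" using FWK K(2) by blast
  then have "compact (F \<inter> cball y r)" using K(1) by (simp add: compact_Int_closed)
  then show "y \<in> locally_compact_points F"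
    using r(1) \<open>y \<in> D\<close> assms(1) unfolding locally_compact_points_def by blast
qed

lemma almost_locally_compact_iff_dense_locally_compact_points:
  "almost_locally_compact F \<longleftrightarrow> F \<subseteq> closure (locally_compact_points F)"
proof
  assume "almost_locally_compact F"
  then obtain D where D: "D \<subseteq> F" "F \<subseteq> closure D" "locally_compact_space (top_of_set D)"
    unfolding almost_locally_compact_def by blast
  then have "closure D \<subseteq> closure (locally_compact_points F)"
    by (intro closure_mono dense_locally_compact_subset_locally_compact_points)
  with D(2) show "F \<subseteq> closure (locally_compact_points F)" by blast
next
  assume "F \<subseteq> closure (locally_compact_points F)"
  then show "almost_locally_compact F"
    unfolding almost_locally_compact_def
    using locally_compact_space_locally_compact_points
    by (intro exI[of _ "locally_compact_points F"] conjI) (auto simp: locally_compact_points_def)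
qed

lemma locally_compact_points_closed_eq:
  fixes F :: "'a::complete_space set"
  assumes "closed F"
  shows "locally_compact_points F = {x \<in> F. \<exists>e>0. totally_bounded (F \<inter> ball x e)}"
proof (intro set_eqI iffI)
  fix x assume "x \<in> locally_compact_points F"
  then obtain e where e: "x \<in> F" "e > 0" "compact (F \<inter> cball x e)"
    unfolding locally_compact_points_def by blast
  then have "totally_bounded (F \<inter> cball x e)"
    by (simp add: compact_eq_closed_totally_bounded)
  then have "totally_bounded (F \<inter> ball x e)"
    by (rule totally_bounded_subset) auto
  with e(1,2) show "x \<in> {x \<in> F. \<exists>e>0. totally_bounded (F \<inter> ball x e)}" by blast
next
  fix x assume "x \<in> {x \<in> F. \<exists>e>0. totally_bounded (F \<inter> ball x e)}"
  then obtain e where "x \<in> F" "e > 0" "totally_bounded (F \<inter> ball x e)" by blast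
  moreover have "F \<inter> cball x (e / 2) \<subseteq> F \<inter> ball x e" using \<open>e > 0\<close> by auto
  ultimately have "totally_bounded (F \<inter> cball x (e / 2))"
    using totally_bounded_subset by blast
  then have "compact (F \<inter> cball x (e / 2))"
    using assms by (simp add: compact_eq_closed_totally_bounded closed_Int)
  then show "x \<in> locally_compact_points F"
    unfolding locally_compact_points_def using \<open>x \<in> F\<close> \<open>e > 0\<close> half_gt_zero by blast
qed

lemma dense_locally_compact_points_iff_basis:
  fixes F :: "'a::complete_space set"
  assumes "closed F" and basis: "topological_basis \<B>"
  shows "F \<subseteq> closure (locally_compact_points F) \<longleftrightarrow>
    (\<forall>B\<in>\<B>. F \<inter> B \<noteq> {} \<longrightarrow> (\<exists>B'\<in>\<B>. B' \<subseteq> B \<and> F \<inter> B' \<noteq> {} \<and> totally_bounded (F \<inter> B')))"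
proof
  assume dense: "F \<subseteq> closure (locally_compact_points F)"
  show "\<forall>B\<in>\<B>. F \<inter> B \<noteq> {} \<longrightarrow> (\<exists>B'\<in>\<B>. B' \<subseteq> B \<and> F \<inter> B' \<noteq> {} \<and> totally_bounded (F \<inter> B'))"
  proof (intro ballI impI)
    fix B assume "B \<in> \<B>" "F \<inter> B \<noteq> {}"
    then have "B \<inter> closure (locally_compact_points F) \<noteq> {}" using dense by blast
    then have "B \<inter> locally_compact_points F \<noteq> {}"
      using open_Int_closure_eq_empty topological_basis_open[OF basis \<open>B \<in> \<B>\<close>] by blast
    then obtain y e where y: "y \<in> B" "y \<in> F" "e > 0" "totally_bounded (F \<inter> ball y e)"
      unfolding locally_compact_points_closed_eq[OF assms(1)] by blast
    have "open (B \<inter> ball y e)"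
      using topological_basis_open[OF basis \<open>B \<in> \<B>\<close>] by blast
    then obtain B' where B': "B' \<in> \<B>" "y \<in> B'" "B' \<subseteq> B \<inter> ball y e"
      using topological_basisE[OF basis, of "B \<inter> ball y e" y] y(1,3) by auto
    have "totally_bounded (F \<inter> B')"
      using y(4) by (rule totally_bounded_subset) (use B'(3) in blast)
    then show "\<exists>B'\<in>\<B>. B' \<subseteq> B \<and> F \<inter> B' \<noteq> {} \<and> totally_bounded (F \<inter> B')"
      using B' y(2) by blast
  qed
next
  assume crit: "\<forall>B\<in>\<B>. F \<inter> B \<noteq> {} \<longrightarrow> (\<exists>B'\<in>\<B>. B' \<subseteq> B \<and> F \<inter> B' \<noteq> {} \<and> totally_bounded (F \<inter> B'))"
  show "F \<subseteq> closure (locally_compact_points F)"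
  proof
    fix x assume "x \<in> F"
    show "x \<in> closure (locally_compact_points F)"
      unfolding closure_approachable
    proof (intro allI impI)
      fix e :: real assume "e > 0"
      then obtain B where B: "B \<in> \<B>" "x \<in> B" "B \<subseteq> ball x e"
        using topological_basisE[OF basis, of "ball x e" x] by auto
      then obtain B' where B': "B' \<in> \<B>" "B' \<subseteq> B" "F \<inter> B' \<noteq> {}" "totally_bounded (F \<inter> B')"
        using crit \<open>x \<in> F\<close> by blast
      then obtain y where y: "y \<in> F" "y \<in> B'" by blast
      obtain r where r: "r > 0" "ball y r \<subseteq> B'"
        using y(2) topological_basis_open[OF basis B'(1)] open_contains_ball by blast
      have "totally_bounded (F \<inter> ball y r)"
        using B'(4) by (rule totally_bounded_subset) (use r(2) in blast)
      then have "y \<in> locally_compact_points F"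
        unfolding locally_compact_points_closed_eq[OF assms(1)] using y(1) r(1) by blast
      moreover have "dist y x < e"
        using y(2) B'(2) B(3) by (auto simp: dist_commute)
      ultimately show "\<exists>y\<in>locally_compact_points F. dist y x < e" by blast
    qed
  qed
qed

theorem proposition3p7:
  assumes "urysohn_extension_property TYPE('a::polish_space)"
  shows "{F::'a set. closed F \<and> almost_locally_compact F} \<in> sets effros_borel"
proof -
  obtain \<B> :: "'a set set" where \<B>: "countable \<B>" "topological_basis \<B>"
    using ex_countable_basis by blast
  have "{F::'a set. closed F \<and> almost_locally_compact F} =
      {F \<in> space effros_borel. \<forall>B\<in>\<B>. F \<inter> B \<noteq> {} \<longrightarrow>
        (\<exists>B'\<in>\<B>. B' \<subseteq> B \<and> F \<inter> B' \<noteq> {} \<and> totally_bounded (F \<inter> B'))}"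
    using dense_locally_compact_points_iff_basis[OF _ \<B>(2)]
    by (auto simp: space_effros_borel almost_locally_compact_iff_dense_locally_compact_points)
  also have "\<dots> \<in> sets effros_borel"
    using \<B>(1) topological_basis_open[OF \<B>(2)]
    by (intro sets.sets_Collect_countable_All' sets.sets_Collect_imp sets.sets_Collect_countable_Ex'
        sets.sets_Collect_conj sets.sets_Collect_const sets_effros_borel_meets
        sets_effros_borel_totally_bounded_Int) auto
  finally show ?thesis .
qed

end
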